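(* In SGD with stochastic batch size as described in the context, setting $\alpha_i=b_i$, for every iteration $i$, $$\mathbb{E}\,\alpha_i^2\|g_i\|^2\le 2b_{\max}\,\mathbb{E}\,\alpha_i\|\nabla\mathcal{L}(\mathcal{D},\theta_i)\|^2+2\sigma^2\,\mathbb{E}\,b_i.$$ Moreover, if $\theta\mapsto\mathcal{L}(\mathcal{D},\theta)$ has $L$-Lipschitz gradient and $\theta^*$ is a global minimizer of it, then $$\mathbb{E}\,\alpha_i^2\|g_i\|^2\le 4b_{\max}L\,\mathbb{E}\,\alpha_i(\mathcal{L}(\mathcal{D},\theta_i)-\mathcal{L}(\mathcal{D},\theta^* ))+2\sigma^2\,\mathbb{E}\,b_i.$$
   Context: $\mathcal{L}(\mathcal{D},\theta)=\frac{1}{|\mathcal{D}|}\sum_{z\in\mathcal{D}}\ell(z,\theta)$ for a finite dataset $\mathcal{D}$ and differentiable loss $\ell$. At iteration $i$ with parameter $\theta_i$, samples $z_i^1,z_i^2,\dots$ are drawn from $\mathcal{D}$, each satisfying, conditionally on $\theta_i$ and all previously drawn samples, $\mathbb{E}[\nabla\ell(z_i^s,\theta_i)]=\nabla\mathcal{L}(\mathcal{D},\theta_i)$ and $\mathbb{E}\|\nabla\ell(z_i^s,\theta_i)-\nabla\mathcal{L}(\mathcal{D},\theta_i)\|^2\le\sigma^2$. Let $g_i^s=\nabla\ell(z_i^s,\theta_i)$. The batch size $b_i$ is a random stopping time with respect to the natural filtration of these samples, satisfying $b_i\le b_{\max}$, and $g_i=\frac{1}{b_i}\sum_{s=1}^{b_i}g_i^s$.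 *)

theory Defs
  imports "HOL-Analysis.Analysis" "HOL-Probability.Probability"
begin

text \<open>Gradient of a real-valued function on a Euclidean space: the (unique, when f is
  differentiable at x) vector g with Frechet derivative h \<mapsto> g \<bullet> h.\<close>
definition grad :: "('v::euclidean_space \<Rightarrow> real) \<Rightarrow> 'v \<Rightarrow> 'v" where
  "grad f x = (THE g. (f has_derivative (\<lambda>h. g \<bullet> h)) (at x))"

definition emp_loss :: "'z set \<Rightarrow> ('z \<Rightarrow> 'v \<Rightarrow> real) \<Rightarrow> 'v \<Rightarrow> real" where
  "emp_loss D loss \<theta> = (1 / real (card D)) * (\<Sum>d\<in>D. loss d \<theta>)"

text \<open>Natural filtration of the samples z 1, z 2, ... of one iteration, on top of the
  history sigma-algebra H (which contains theta_i and all previously drawn samples).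
  smp_filt M H z s = sigma(H, z 1, ..., z s).\<close>
definition smp_filt :: "'a measure \<Rightarrow> 'a measure \<Rightarrow> (nat \<Rightarrow> 'a \<Rightarrow> 'z) \<Rightarrow> nat \<Rightarrow> 'a measure" where
  "smp_filt M H z s =
     sigma (space M) (sets H \<union> (\<Union>t\<in>{1..s}. {z t -` A \<inter> space M | A. True}))"

end

theory Submission
  imports Defs
begin

text \<open>Write X_s = g_s - \<nabla>L(\<theta>). Then b g_i = (\<Sum>s\<le>b. X_s) + b \<nabla>L(\<theta>), so
  |b g_i|^2 \<le> 2 |\<Sum>s\<le>b. X_s|^2 + 2 b_max b |\<nabla>L(\<theta>)|^2. Whether s \<le> b is decided before the
  s-th sample is drawn, so the gated increments 1{s \<le> b} X_s are conditionally centred, hence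
  orthogonal, and each adds at most \<sigma>^2 P(s \<le> b) to the second moment of the stopped sum;
  summing over s gives E |\<Sum>s\<le>b. X_s|^2 \<le> \<sigma>^2 E b. For the second bound, the descent lemma
  for an L-smooth function gives |\<nabla>L(\<theta>)|^2 \<le> 2 L (L(\<theta>) - L(\<theta>*)).\<close>

section \<open>Gradients of the empirical loss\<close>

lemma grad_eqI:
  fixes f :: "'v::euclidean_space \<Rightarrow> real"
  assumes "(f has_derivative (\<lambda>h. v \<bullet> h)) (at x)"
  shows "grad f x = v"
  unfolding grad_def
proof (rule the_equality)
  fix w assume "(f has_derivative (\<lambda>h. w \<bullet> h)) (at x)"
  then have "(\<lambda>h. w \<bullet> h) = (\<lambda>h. v \<bullet> h)"
    using has_derivative_unique assms by blast
  then have "(w - v) \<bullet> (w - v) = 0"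
    by (metis inner_diff_left right_minus_eq)
  then show "w = v" by simp
qed fact

lemma has_derivative_grad:
  fixes f :: "'v::euclidean_space \<Rightarrow> real"
  assumes "f differentiable (at x)"
  shows "(f has_derivative (\<lambda>h. grad f x \<bullet> h)) (at x)"
proof -
  obtain f' where f': "(f has_derivative f') (at x)"
    using assms differentiable_def by blast
  define v where "v = (\<Sum>j\<in>Basis. f' j *\<^sub>R j)"
  have "f' = (\<lambda>h. v \<bullet> h)"
  proof
    fix h
    have "f' h = f' (\<Sum>j\<in>Basis. (h \<bullet> j) *\<^sub>R j)"
      by (simp add: euclidean_representation)
    also have "\<dots> = (\<Sum>j\<in>Basis. (h \<bullet> j) * f' j)"
      using has_derivative_linear[OF f'] by (simp add: linear_sum linear_scale)
    also have "\<dots> = v \<bullet> h"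
      by (simp add: v_def inner_sum_right inner_commute mult.commute)
    finally show "f' h = v \<bullet> h" .
  qed
  with f' have "(f has_derivative (\<lambda>h. v \<bullet> h)) (at x)"
    by simp
  with grad_eqI[OF this] show ?thesis
    by simp
qed

lemma has_derivative_emp_loss:
  assumes "\<And>d x. d \<in> D \<Longrightarrow> loss d differentiable (at x)"
  shows "(emp_loss D loss has_derivative
           (\<lambda>h. ((1 / real (card D)) *\<^sub>R (\<Sum>d\<in>D. grad (loss d) x)) \<bullet> h)) (at x)"
proof -
  have "((\<lambda>\<theta>. \<Sum>d\<in>D. loss d \<theta>) has_derivative (\<lambda>h. \<Sum>d\<in>D. grad (loss d) x \<bullet> h)) (at x)"
    using has_derivative_grad assms by (intro has_derivative_sum) blast
  from has_derivative_mult_right[OF this, of "1 / real (card D)"] show ?thesis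
    unfolding emp_loss_def[abs_def] by (simp add: inner_sum_left)
qed

lemma grad_emp_loss:
  assumes "\<And>d x. d \<in> D \<Longrightarrow> loss d differentiable (at x)"
  shows "grad (emp_loss D loss) x = (1 / real (card D)) *\<^sub>R (\<Sum>d\<in>D. grad (loss d) x)"
  using has_derivative_emp_loss[OF assms] by (rule grad_eqI)

lemma has_derivative_grad_emp_loss:
  assumes "\<And>d x. d \<in> D \<Longrightarrow> loss d differentiable (at x)"
  shows "(emp_loss D loss has_derivative (\<lambda>h. grad (emp_loss D loss) x \<bullet> h)) (at x)"
  using has_derivative_emp_loss[OF assms] by (simp add: grad_emp_loss[OF assms])

lemma borel_measurable_grad_emp_loss:
  assumes "\<And>d x. d \<in> D \<Longrightarrow> loss d differentiable (at x)"
    and "\<And>d. d \<in> D \<Longrightarrow> grad (loss d) \<in> borel_measurable borel"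
  shows "grad (emp_loss D loss) \<in> borel_measurable borel"
proof -
  have "grad (emp_loss D loss) = (\<lambda>x. (1 / real (card D)) *\<^sub>R (\<Sum>d\<in>D. grad (loss d) x))"
    using grad_emp_loss[OF assms(1)] by (rule ext)
  then show ?thesis
    using assms(2) by simp
qed

section \<open>Functions with Lipschitz gradient\<close>

lemma lipschitz_gradient_upper_bound:
  fixes f :: "'v::real_inner \<Rightarrow> real"
  assumes f: "\<And>x. (f has_derivative (\<lambda>h. G x \<bullet> h)) (at x)"
    and lip: "L-lipschitz_on UNIV G"
  shows "f (x + v) \<le> f x + G x \<bullet> v + L / 2 * (norm v)\<^sup>2"
proof -
  define \<psi> where "\<psi> t = f (x + t *\<^sub>R v) - t * (G x \<bullet> v) - L / 2 * t\<^sup>2 * (norm v)\<^sup>2" for t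
  have \<psi>': "(\<psi> has_real_derivative (G (x + t *\<^sub>R v) - G x) \<bullet> v - L * t * (norm v)\<^sup>2) (at t)" for t
  proof -
    have "((\<lambda>t. x + t *\<^sub>R v) has_derivative (\<lambda>h. h *\<^sub>R v)) (at t)"
      by (auto intro!: derivative_eq_intros)
    from has_derivative_compose[OF this f]
    have "((\<lambda>t. f (x + t *\<^sub>R v)) has_real_derivative G (x + t *\<^sub>R v) \<bullet> v) (at t)"
      by (simp add: has_field_derivative_def mult_commute_abs)
    then show ?thesis
      unfolding \<psi>_def by (auto intro!: derivative_eq_intros simp: power2_eq_square inner_diff_left)
  qed
  have "\<psi> 1 \<le> \<psi> 0"
  proof (rule DERIV_nonpos_imp_nonincreasing[of 0 1])
    fix t :: real assume t: "0 \<le> t" "t \<le> 1"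
    have "(G (x + t *\<^sub>R v) - G x) \<bullet> v \<le> norm (G (x + t *\<^sub>R v) - G x) * norm v"
      by (rule norm_cauchy_schwarz)
    also have "\<dots> \<le> L * norm (t *\<^sub>R v) * norm v"
      using lipschitz_onD[OF lip, of "x + t *\<^sub>R v" x] by (simp add: dist_norm mult_right_mono)
    also have "\<dots> = L * t * (norm v)\<^sup>2"
      using t by (simp add: power2_eq_square)
    finally show "\<exists>y. (\<psi> has_real_derivative y) (at t) \<and> y \<le> 0"
      using \<psi>' by force
  qed simp
  then show ?thesis
    unfolding \<psi>_def by simp
qed

text \<open>Minimise the bound of lipschitz_gradient_upper_bound at x - t G x over t.\<close>
lemma power2_norm_gradient_le_suboptimality:
  fixes f :: "'v::real_inner \<Rightarrow> real"
  assumes f: "\<And>x. (f has_derivative (\<lambda>h. G x \<bullet> h)) (at x)"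
    and lip: "L-lipschitz_on UNIV G"
    and min: "\<And>y. f m \<le> f y"
  shows "(norm (G x))\<^sup>2 \<le> 2 * L * (f x - f m)"
proof -
  have step: "f m \<le> f x - t * (norm (G x))\<^sup>2 + L / 2 * t\<^sup>2 * (norm (G x))\<^sup>2" for t
  proof -
    have "f m \<le> f (x + (- t) *\<^sub>R G x)"
      by (rule min)
    also have "\<dots> \<le> f x + G x \<bullet> ((- t) *\<^sub>R G x) + L / 2 * (norm ((- t) *\<^sub>R G x))\<^sup>2"
      by (rule lipschitz_gradient_upper_bound[OF f lip])
    also have "\<dots> = f x - t * (norm (G x))\<^sup>2 + L / 2 * t\<^sup>2 * (norm (G x))\<^sup>2"
      by (simp add: power2_norm_eq_inner power_mult_distrib)
    finally show ?thesis .
  qed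
  show ?thesis
  proof (cases "L = 0")
    case True
    have "G x = 0"
    proof (rule ccontr)
      assume "G x \<noteq> 0"
      then have "f m \<le> f x - (f x - f m + 1)"
        using step[of "(f x - f m + 1) / (norm (G x))\<^sup>2"] True by simp
      then show False by simp
    qed
    with True show ?thesis by simp
  next
    case False
    then have "L > 0"
      using lipschitz_on_nonneg[OF lip] by simp
    with step[of "1 / L"] show ?thesis
      by (simp add: field_simps power2_eq_square)
  qed
qed

lemma nn_integral_weighted_power2_norm_gradient_le:
  fixes f :: "'v::euclidean_space \<Rightarrow> real" and \<theta> :: "'a \<Rightarrow> 'v"
  assumes f: "\<And>x. (f has_derivative (\<lambda>h. G x \<bullet> h)) (at x)"
    and lip: "L-lipschitz_on UNIV G" and min: "\<And>y. f m \<le> f y"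
    and \<theta> [measurable]: "\<theta> \<in> borel_measurable M"
    and w [measurable]: "w \<in> borel_measurable M" and w_nonneg: "\<And>\<omega>. 0 \<le> w \<omega>"
  shows "(\<integral>\<^sup>+\<omega>. ennreal (w \<omega> * (norm (G (\<theta> \<omega>)))\<^sup>2) \<partial>M)
    \<le> ennreal (2 * L) * (\<integral>\<^sup>+\<omega>. ennreal (w \<omega> * (f (\<theta> \<omega>) - f m)) \<partial>M)"
proof -
  have "continuous_on UNIV f"
    using f by (intro continuous_at_imp_continuous_on ballI) (blast intro: has_derivative_continuous)
  then have [measurable]: "f \<in> borel_measurable borel"
    by (rule borel_measurable_continuous_onI)
  have L: "0 \<le> L"
    using lip by (rule lipschitz_on_nonneg)
  have "(\<integral>\<^sup>+\<omega>. ennreal (w \<omega> * (norm (G (\<theta> \<omega>)))\<^sup>2) \<partial>M)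
      \<le> (\<integral>\<^sup>+\<omega>. ennreal (2 * L) * ennreal (w \<omega> * (f (\<theta> \<omega>) - f m)) \<partial>M)"
  proof (rule nn_integral_mono)
    fix \<omega>
    have "w \<omega> * (norm (G (\<theta> \<omega>)))\<^sup>2 \<le> w \<omega> * (2 * L * (f (\<theta> \<omega>) - f m))"
      using power2_norm_gradient_le_suboptimality[OF f lip min] w_nonneg by (rule mult_left_mono)
    then show "ennreal (w \<omega> * (norm (G (\<theta> \<omega>)))\<^sup>2) \<le> ennreal (2 * L) * ennreal (w \<omega> * (f (\<theta> \<omega>) - f m))"
      using L w_nonneg min[of "\<theta> \<omega>"] by (simp add: ennreal_mult[symmetric] ennreal_leI mult.left_commute)
  qed
  also have "\<dots> = ennreal (2 * L) * (\<integral>\<^sup>+\<omega>. ennreal (w \<omega> * (f (\<theta> \<omega>) - f m)) \<partial>M)"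
    by (intro nn_integral_cmult) measurable
  finally show ?thesis .
qed

section \<open>The sample filtration\<close>

lemma space_smp_filt [simp]: "space (smp_filt M H z s) = space M"
  by (simp add: smp_filt_def space_measure_of_conv)

lemma sets_smp_filt:
  assumes "subalgebra M H"
  shows "sets (smp_filt M H z s) =
    sigma_sets (space M) (sets H \<union> (\<Union>t\<in>{1..s}. {z t -` A \<inter> space M | A. True}))"
  unfolding smp_filt_def using sets.sets_into_space[of _ H] assms
  by (subst sets_measure_of) (auto simp: subalgebra_def)

lemma subalgebra_smp_filt:
  assumes H: "subalgebra M H" and z: "\<And>s. 1 \<le> s \<Longrightarrow> z s \<in> measurable M (count_space UNIV)"
  shows "subalgebra M (smp_filt M H z s)"
proof -
  have "z t -` A \<inter> space M \<in> sets M" if "1 \<le> t" for t A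
    using measurable_sets[OF z[OF that], of A] by simp
  moreover have "sets H \<subseteq> sets M"
    using H by (simp add: subalgebra_def)
  ultimately have "sigma_sets (space M) (sets H \<union> (\<Union>t\<in>{1..s}. {z t -` A \<inter> space M | A. True}))
      \<subseteq> sets M"
    by (intro sets.sigma_sets_subset) auto
  then show ?thesis
    unfolding subalgebra_def sets_smp_filt[OF H] space_smp_filt by blast
qed

lemma subalgebra_smp_filt_mono:
  assumes H: "subalgebra M H" and "s \<le> t"
  shows "subalgebra (smp_filt M H z t) (smp_filt M H z s)"
proof -
  have "sets (smp_filt M H z s) \<subseteq> sets (smp_filt M H z t)"
    unfolding sets_smp_filt[OF H]
  proof (intro sigma_sets_mono' Un_mono UN_mono)
    show "{1..s} \<subseteq> {1..t}"
      using \<open>s \<le> t\<close> by simp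
  qed simp_all
  then show ?thesis
    by (simp add: subalgebra_def)
qed

lemma measurable_smp_filt_base:
  assumes H: "subalgebra M H" and f: "f \<in> measurable H N"
  shows "f \<in> measurable (smp_filt M H z s) N"
proof (rule measurable_from_subalg[OF _ f])
  show "subalgebra (smp_filt M H z s) H"
    using H unfolding subalgebra_def sets_smp_filt[OF H] by auto
qed

lemma measurable_smp_filt_sample:
  assumes H: "subalgebra M H" and "1 \<le> s" "s \<le> t" and D: "\<And>\<omega>. \<omega> \<in> space M \<Longrightarrow> z s \<omega> \<in> D"
  shows "z s \<in> measurable (smp_filt M H z t) (count_space D)"
proof (rule measurableI)
  show "z s \<omega> \<in> space (count_space D)" if "\<omega> \<in> space (smp_filt M H z t)" for \<omega>
    using D that by simp
  fix A
  have "z s -` A \<inter> space M \<in> (\<Union>r\<in>{1..t}. {z r -` A \<inter> space M | A. True})"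
    using assms(2,3) by (intro UN_I[of s]) auto
  then show "z s -` A \<inter> space (smp_filt M H z t) \<in> sets (smp_filt M H z t)"
    unfolding sets_smp_filt[OF H] space_smp_filt by (blast intro: sigma_sets.Basic)
qed

lemma borel_measurable_smp_filt_sample_apply:
  assumes H: "subalgebra M H" and s: "1 \<le> s" "s \<le> t"
    and D: "countable D" "\<And>\<omega>. \<omega> \<in> space M \<Longrightarrow> z s \<omega> \<in> D"
    and \<theta>: "\<theta> \<in> borel_measurable H" and h: "\<And>d. d \<in> D \<Longrightarrow> h d \<in> borel_measurable borel"
  shows "(\<lambda>\<omega>. h (z s \<omega>) (\<theta> \<omega>)) \<in> borel_measurable (smp_filt M H z t)"
proof (rule measurable_compose_countable'[OF _ _ D(1)])
  show "z s \<in> measurable (smp_filt M H z t) (count_space D)"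
    using H s D(2) by (rule measurable_smp_filt_sample)
  show "(\<lambda>\<omega>. h d (\<theta> \<omega>)) \<in> borel_measurable (smp_filt M H z t)" if "d \<in> D" for d
    using h[OF that] measurable_smp_filt_base[OF H \<theta>] by measurable
qed

section \<open>Stopped sums of conditionally centred increments\<close>

lemma stopping_time_Suc_le:
  fixes T :: "'a \<Rightarrow> nat"
  assumes "stopping_time F T"
  shows "Measurable.pred (F t) (\<lambda>\<omega>. Suc t \<le> T \<omega>)"
  using stopping_timeD2[OF assms, of t] by (simp add: Suc_le_eq)

lemma measurable_stopping_time_count_space:
  fixes T :: "'a \<Rightarrow> nat"
  assumes T: "stopping_time F T" and subalg: "\<And>t. subalgebra M (F t)"
  shows "T \<in> measurable M (count_space UNIV)"
proof -
  have "T \<in> borel_measurable M"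
    using subalg by (intro measurable_stopping_time[OF T]) (auto simp: subalgebra_def)
  then show ?thesis
    using measurable_cong_sets[OF refl sets_borel_eq_count_space] by blast
qed

lemma borel_measurable_stopped_sum:
  fixes X :: "nat \<Rightarrow> 'a \<Rightarrow> 'v::euclidean_space" and T :: "'a \<Rightarrow> nat"
  assumes mono: "\<And>s t. s \<le> t \<Longrightarrow> subalgebra (F t) (F s)"
    and X: "\<And>s. 1 \<le> s \<Longrightarrow> X s \<in> borel_measurable (F s)"
    and T: "stopping_time F T"
  shows "(\<lambda>\<omega>. \<Sum>s=1..min (T \<omega>) t. X s \<omega>) \<in> borel_measurable (F t)"
proof -
  have "(\<lambda>\<omega>. \<Sum>s\<in>{1..t}. if s \<le> T \<omega> then X s \<omega> else 0) \<in> borel_measurable (F t)"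
  proof (intro borel_measurable_sum)
    fix s assume "s \<in> {1..t}"
    then have s: "1 \<le> s" "s \<le> t"
      by simp_all
    have [measurable]: "X s \<in> borel_measurable (F t)"
      by (rule measurable_from_subalg[OF mono[OF s(2)] X[OF s(1)]])
    have "Measurable.pred (F (s - 1)) (\<lambda>\<omega>. s \<le> T \<omega>)"
      using stopping_time_Suc_le[OF T, of "s - 1"] s by simp
    moreover have "s - 1 \<le> t"
      using s by simp
    ultimately have [measurable]: "Measurable.pred (F t) (\<lambda>\<omega>. s \<le> T \<omega>)"
      using measurable_from_subalg[OF mono] by blast
    show "(\<lambda>\<omega>. if s \<le> T \<omega> then X s \<omega> else 0) \<in> borel_measurable (F t)"
      by measurable
  qed
  moreover have "(\<Sum>s=1..min (T \<omega>) t. X s \<omega>) = (\<Sum>s\<in>{1..t}. if s \<le> T \<omega> then X s \<omega> else 0)" for \<omega>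
  proof -
    have "{s \<in> {1..t}. s \<le> T \<omega>} = {1..min (T \<omega>) t}"
      by auto
    then show ?thesis
      by (simp add: sum.inter_filter[symmetric])
  qed
  ultimately show ?thesis
    by simp
qed

lemma (in prob_space) integral_indicator_mult_le_of_nn_cond_exp_le:
  fixes f :: "'a \<Rightarrow> real"
  assumes F: "subalgebra M F" and A: "A \<in> sets F"
    and f: "f \<in> borel_measurable M" "\<And>x. 0 \<le> f x"
    and bound: "AE x in M. nn_cond_exp M F (\<lambda>x. ennreal (f x)) x \<le> ennreal c" and c: "0 \<le> c"
  shows "integrable M (\<lambda>x. indicator A x * f x)"
    and "(\<integral>x. indicator A x * f x \<partial>M) \<le> c * measure M A"
proof -
  interpret finite_measure_subalgebra M F
    by unfold_locales (rule F)
  have A_M: "A \<in> sets M"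
    using A F by (auto simp: subalgebra_def)
  have [measurable]: "A \<in> sets F" "f \<in> borel_measurable M"
    using A f(1) .
  have "(\<integral>\<^sup>+x. ennreal (indicator A x * f x) \<partial>M) = (\<integral>\<^sup>+x. indicator A x * ennreal (f x) \<partial>M)"
    by (intro nn_integral_cong) (simp split: split_indicator)
  also have "\<dots> = (\<integral>\<^sup>+x. indicator A x * nn_cond_exp M F (\<lambda>x. ennreal (f x)) x \<partial>M)"
    by (intro nn_cond_exp_intg[symmetric]) measurable
  also have "\<dots> \<le> (\<integral>\<^sup>+x. ennreal c * indicator A x \<partial>M)"
    using bound by (intro nn_integral_mono_AE) (auto elim!: eventually_mono split: split_indicator)
  also have "\<dots> = ennreal (c * measure M A)"
    using A_M c by (simp add: nn_integral_cmult_indicator emeasure_eq_measure ennreal_mult)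
  finally have nn: "(\<integral>\<^sup>+x. ennreal (indicator A x * f x) \<partial>M) \<le> ennreal (c * measure M A)" .
  show int: "integrable M (\<lambda>x. indicator A x * f x)"
    using nn A_M f by (intro integrableI_nonneg) (auto simp: top.not_eq_extremum intro: le_less_trans)
  have "ennreal (\<integral>x. indicator A x * f x \<partial>M) \<le> ennreal (c * measure M A)"
    using nn int f by (subst nn_integral_eq_integral[symmetric]) auto
  moreover have "0 \<le> c * measure M A"
    using c by simp
  ultimately show "(\<integral>x. indicator A x * f x \<partial>M) \<le> c * measure M A"
    using ennreal_le_iff by blast
qed

lemma (in prob_space) integral_inner_eq_0_of_cond_exp_eq_0:
  fixes U V :: "'a \<Rightarrow> 'v::euclidean_space"
  assumes F: "subalgebra M F"
    and U: "U \<in> borel_measurable F" "integrable M (\<lambda>x. (norm (U x))\<^sup>2)"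
    and V: "V \<in> borel_measurable M" "integrable M (\<lambda>x. (norm (V x))\<^sup>2)"
    and centred: "\<And>j. j \<in> Basis \<Longrightarrow> AE x in M. real_cond_exp M F (\<lambda>x. V x \<bullet> j) x = 0"
  shows "integrable M (\<lambda>x. U x \<bullet> V x)" and "(\<integral>x. U x \<bullet> V x \<partial>M) = 0"
proof -
  interpret finite_measure_subalgebra M F
    by unfold_locales (rule F)
  have [measurable]: "U \<in> borel_measurable M" "V \<in> borel_measurable M"
    using measurable_from_subalg[OF F U(1)] V(1) .
  have [measurable]: "U \<in> borel_measurable F"
    by (rule U(1))
  have int_j: "integrable M (\<lambda>x. (U x \<bullet> j) * (V x \<bullet> j))" if j: "j \<in> Basis" for j
  proof (rule Bochner_Integration.integrable_bound[OF Bochner_Integration.integrable_add[OF U(2) V(2)]])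
    show "(\<lambda>x. (U x \<bullet> j) * (V x \<bullet> j)) \<in> borel_measurable M"
      by measurable
    have "\<bar>(U x \<bullet> j) * (V x \<bullet> j)\<bar> \<le> (norm (U x))\<^sup>2 + (norm (V x))\<^sup>2" for x
    proof -
      have "\<bar>(U x \<bullet> j) * (V x \<bullet> j)\<bar> \<le> norm (U x) * norm (V x)"
        unfolding abs_mult using Basis_le_norm[OF j] by (intro mult_mono) auto
      also have "\<dots> \<le> (norm (U x))\<^sup>2 + (norm (V x))\<^sup>2"
        using sum_squares_bound[of "norm (U x)" "norm (V x)"]
          mult_nonneg_nonneg[OF norm_ge_zero norm_ge_zero, of "U x" "V x"] by linarith
      finally show ?thesis .
    qed
    then show "AE x in M. norm ((U x \<bullet> j) * (V x \<bullet> j)) \<le> norm ((norm (U x))\<^sup>2 + (norm (V x))\<^sup>2)"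
      by simp
  qed
  have zero_j: "(\<integral>x. (U x \<bullet> j) * (V x \<bullet> j) \<partial>M) = 0" if j: "j \<in> Basis" for j
  proof -
    have "(\<integral>x. (U x \<bullet> j) * (V x \<bullet> j) \<partial>M) = (\<integral>x. (U x \<bullet> j) * real_cond_exp M F (\<lambda>x. V x \<bullet> j) x \<partial>M)"
      using int_j[OF j] by (intro real_cond_exp_intg(2)[symmetric]) measurable
    also have "\<dots> = 0"
      using centred[OF j] by (intro integral_eq_zero_AE) (auto elim: eventually_mono)
    finally show ?thesis .
  qed
  have inner: "U x \<bullet> V x = (\<Sum>j\<in>Basis. (U x \<bullet> j) * (V x \<bullet> j))" for x
    by (rule euclidean_inner)
  show "integrable M (\<lambda>x. U x \<bullet> V x)"
    unfolding inner using int_j by (intro Bochner_Integration.integrable_sum)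
  show "(\<integral>x. U x \<bullet> V x \<partial>M) = 0"
    unfolding inner using int_j zero_j by (simp add: Bochner_Integration.integral_sum)
qed

lemma (in prob_space) second_moment_add_gated_increment_le:
  fixes S Y :: "'a \<Rightarrow> 'v::euclidean_space"
  assumes F: "subalgebra M F" and A: "A \<in> sets F"
    and S: "S \<in> borel_measurable F" "integrable M (\<lambda>\<omega>. (norm (S \<omega>))\<^sup>2)"
    and Y: "Y \<in> borel_measurable M"
    and centred: "\<And>j. j \<in> Basis \<Longrightarrow> AE \<omega> in M. real_cond_exp M F (\<lambda>\<omega>. Y \<omega> \<bullet> j) \<omega> = 0"
    and var: "AE \<omega> in M. nn_cond_exp M F (\<lambda>\<omega>. ennreal ((norm (Y \<omega>))\<^sup>2)) \<omega> \<le> ennreal (\<sigma>\<^sup>2)"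
  shows "integrable M (\<lambda>\<omega>. (norm (S \<omega> + indicator A \<omega> *\<^sub>R Y \<omega>))\<^sup>2)"
    and "(\<integral>\<omega>. (norm (S \<omega> + indicator A \<omega> *\<^sub>R Y \<omega>))\<^sup>2 \<partial>M)
      \<le> (\<integral>\<omega>. (norm (S \<omega>))\<^sup>2 \<partial>M) + \<sigma>\<^sup>2 * measure M A"
proof -
  have Y_sq: "integrable M (\<lambda>\<omega>. indicator B \<omega> * (norm (Y \<omega>))\<^sup>2)"
    "(\<integral>\<omega>. indicator B \<omega> * (norm (Y \<omega>))\<^sup>2 \<partial>M) \<le> \<sigma>\<^sup>2 * measure M B"
    if "B \<in> sets F" for B
    using integral_indicator_mult_le_of_nn_cond_exp_le[OF F that _ _ var] Y by simp_all
  have Y_int: "integrable M (\<lambda>\<omega>. (norm (Y \<omega>))\<^sup>2)"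
  proof -
    have "space M \<in> sets F"
      using sets.top[of F] F by (metis subalgebra_def)
    from Y_sq(1)[OF this] show ?thesis
      by (simp cong: Bochner_Integration.integrable_cong)
  qed
  define U where "U \<omega> = indicator A \<omega> *\<^sub>R S \<omega>" for \<omega>
  have U_F: "U \<in> borel_measurable F"
    unfolding U_def[abs_def] using A S(1) by measurable
  have U_int: "integrable M (\<lambda>\<omega>. (norm (U \<omega>))\<^sup>2)"
  proof (rule Bochner_Integration.integrable_bound[OF S(2)])
    show "(\<lambda>\<omega>. (norm (U \<omega>))\<^sup>2) \<in> borel_measurable M"
      using measurable_from_subalg[OF F U_F] by measurable
  qed (simp add: U_def indicator_def)
  have cross: "integrable M (\<lambda>\<omega>. U \<omega> \<bullet> Y \<omega>)" "(\<integral>\<omega>. U \<omega> \<bullet> Y \<omega> \<partial>M) = 0"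
    using integral_inner_eq_0_of_cond_exp_eq_0[OF F U_F U_int Y Y_int centred] by simp_all
  have expand: "(norm (S \<omega> + indicator A \<omega> *\<^sub>R Y \<omega>))\<^sup>2 =
      (norm (S \<omega>))\<^sup>2 + 2 * (U \<omega> \<bullet> Y \<omega>) + indicator A \<omega> * (norm (Y \<omega>))\<^sup>2" for \<omega>
    by (simp add: U_def indicator_def power2_norm_eq_inner inner_add_left inner_add_right inner_commute)
  show "integrable M (\<lambda>\<omega>. (norm (S \<omega> + indicator A \<omega> *\<^sub>R Y \<omega>))\<^sup>2)"
    unfolding expand using S(2) cross(1) Y_sq(1)[OF A] by simp
  have "(\<integral>\<omega>. (norm (S \<omega> + indicator A \<omega> *\<^sub>R Y \<omega>))\<^sup>2 \<partial>M) = (\<integral>\<omega>. (norm (S \<omega>))\<^sup>2 \<partial>M)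
      + 2 * (\<integral>\<omega>. U \<omega> \<bullet> Y \<omega> \<partial>M) + (\<integral>\<omega>. indicator A \<omega> * (norm (Y \<omega>))\<^sup>2 \<partial>M)"
    unfolding expand using S(2) cross(1) Y_sq(1)[OF A] by simp
  then show "(\<integral>\<omega>. (norm (S \<omega> + indicator A \<omega> *\<^sub>R Y \<omega>))\<^sup>2 \<partial>M)
      \<le> (\<integral>\<omega>. (norm (S \<omega>))\<^sup>2 \<partial>M) + \<sigma>\<^sup>2 * measure M A"
    using cross(2) Y_sq(2)[OF A] by simp
qed

lemma (in prob_space) stopped_sum_second_moment_le:
  fixes X :: "nat \<Rightarrow> 'a \<Rightarrow> 'v::euclidean_space" and b :: "'a \<Rightarrow> nat"
  assumes subalg: "\<And>t. subalgebra M (F t)"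
    and mono: "\<And>s t. s \<le> t \<Longrightarrow> subalgebra (F t) (F s)"
    and X: "\<And>s. 1 \<le> s \<Longrightarrow> X s \<in> borel_measurable (F s)"
    and centred: "\<And>s j. 1 \<le> s \<Longrightarrow> j \<in> Basis \<Longrightarrow>
      AE \<omega> in M. real_cond_exp M (F (s - 1)) (\<lambda>\<omega>. X s \<omega> \<bullet> j) \<omega> = 0"
    and var: "\<And>s. 1 \<le> s \<Longrightarrow>
      AE \<omega> in M. nn_cond_exp M (F (s - 1)) (\<lambda>\<omega>. ennreal ((norm (X s \<omega>))\<^sup>2)) \<omega> \<le> ennreal (\<sigma>\<^sup>2)"
    and b: "stopping_time F b"
  shows "integrable M (\<lambda>\<omega>. (norm (\<Sum>s=1..min (b \<omega>) t. X s \<omega>))\<^sup>2) \<and>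
    (\<integral>\<omega>. (norm (\<Sum>s=1..min (b \<omega>) t. X s \<omega>))\<^sup>2 \<partial>M) \<le> \<sigma>\<^sup>2 * (\<integral>\<omega>. real (min (b \<omega>) t) \<partial>M)"
proof (induction t)
  case 0
  show ?case
    by simp
next
  case (Suc t)
  define S where "S u \<omega> = (\<Sum>s=1..min (b \<omega>) u. X s \<omega>)" for u \<omega>
  define A where "A = {\<omega> \<in> space M. Suc t \<le> b \<omega>}"
  have space_F: "space (F t) = space M"
    using subalg[of t] by (simp add: subalgebra_def)
  have A_F: "A \<in> sets (F t)"
    using stopping_time_Suc_le[OF b, of t] unfolding A_def space_F[symmetric] by measurable
  have A_M: "A \<in> sets M"
    using A_F subalg[of t] by (auto simp: subalgebra_def)
  have S_Suc: "S (Suc t) \<omega> = S t \<omega> + indicator A \<omega> *\<^sub>R X (Suc t) \<omega>" if "\<omega> \<in> space M" for \<omega>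
    using that by (cases "Suc t \<le> b \<omega>") (simp_all add: S_def A_def min_absorb1 min_absorb2)
  have min_Suc: "real (min (b \<omega>) (Suc t)) = real (min (b \<omega>) t) + indicator A \<omega>" if "\<omega> \<in> space M" for \<omega>
    using that by (auto simp: A_def indicator_def min_def)
  have IH: "integrable M (\<lambda>\<omega>. (norm (S t \<omega>))\<^sup>2)"
    "(\<integral>\<omega>. (norm (S t \<omega>))\<^sup>2 \<partial>M) \<le> \<sigma>\<^sup>2 * (\<integral>\<omega>. real (min (b \<omega>) t) \<partial>M)"
    using Suc.IH unfolding S_def by simp_all
  have S_F: "S t \<in> borel_measurable (F t)"
    unfolding S_def using mono X b by (rule borel_measurable_stopped_sum)
  have X_M: "X (Suc t) \<in> borel_measurable M"
    using measurable_from_subalg[OF subalg X[of "Suc t"]] by simp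
  have centred_t: "AE \<omega> in M. real_cond_exp M (F t) (\<lambda>\<omega>. X (Suc t) \<omega> \<bullet> j) \<omega> = 0" if "j \<in> Basis" for j
    using centred[of "Suc t" j] that by simp
  have var_t: "AE \<omega> in M. nn_cond_exp M (F t) (\<lambda>\<omega>. ennreal ((norm (X (Suc t) \<omega>))\<^sup>2)) \<omega> \<le> ennreal (\<sigma>\<^sup>2)"
    using var[of "Suc t"] by simp
  note increment = second_moment_add_gated_increment_le[OF subalg A_F S_F IH(1) X_M centred_t var_t]
  have "integrable M (\<lambda>\<omega>. real (min (b \<omega>) t))"
    using measurable_stopping_time_count_space[OF b subalg]
    by (intro integrable_const_bound[where B="real t"]) auto
  then have "(\<integral>\<omega>. real (min (b \<omega>) (Suc t)) \<partial>M) = (\<integral>\<omega>. real (min (b \<omega>) t) \<partial>M) + measure M A"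
    using A_M by (simp add: min_Suc less_top[symmetric] cong: Bochner_Integration.integral_cong)
  with IH increment have "integrable M (\<lambda>\<omega>. (norm (S (Suc t) \<omega>))\<^sup>2) \<and>
      (\<integral>\<omega>. (norm (S (Suc t) \<omega>))\<^sup>2 \<partial>M) \<le> \<sigma>\<^sup>2 * (\<integral>\<omega>. real (min (b \<omega>) (Suc t)) \<partial>M)"
    by (simp add: S_Suc distrib_left cong: Bochner_Integration.integrable_cong Bochner_Integration.integral_cong)
  then show ?case
    unfolding S_def .
qed

section \<open>Second moment of a stochastic batch\<close>

lemma power2_norm_add_le:
  fixes x y :: "'v::real_normed_vector"
  shows "(norm (x + y))\<^sup>2 \<le> 2 * (norm x)\<^sup>2 + 2 * (norm y)\<^sup>2"
proof -
  have "(norm (x + y))\<^sup>2 \<le> (norm x + norm y)\<^sup>2"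
    by (simp add: norm_triangle_ineq power_mono)
  also have "\<dots> \<le> 2 * (norm x)\<^sup>2 + 2 * (norm y)\<^sup>2"
    using sum_squares_bound[of "norm x" "norm y"] by (simp add: power2_sum)
  finally show ?thesis .
qed

lemma power2_norm_batch_sum_le:
  fixes g :: "nat \<Rightarrow> 'v::real_normed_vector"
  assumes "n \<le> N"
  shows "(real n)\<^sup>2 * (norm ((1 / real n) *\<^sub>R (\<Sum>s=1..n. g s)))\<^sup>2
    \<le> 2 * (norm (\<Sum>s=1..n. g s - G))\<^sup>2 + 2 * real N * (real n * (norm G)\<^sup>2)"
proof (cases "n = 0")
  case False
  have "(real n)\<^sup>2 * (norm ((1 / real n) *\<^sub>R (\<Sum>s=1..n. g s)))\<^sup>2 = (norm (\<Sum>s=1..n. g s))\<^sup>2"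
    using False by (simp add: power_mult_distrib power_divide)
  also have "\<dots> = (norm ((\<Sum>s=1..n. g s - G) + real n *\<^sub>R G))\<^sup>2"
    by (simp add: sum_subtractf sum_constant_scaleR)
  also have "\<dots> \<le> 2 * (norm (\<Sum>s=1..n. g s - G))\<^sup>2 + 2 * (real n * (real n * (norm G)\<^sup>2))"
    using power2_norm_add_le[of "\<Sum>s=1..n. g s - G" "real n *\<^sub>R G"]
    by (simp add: power_mult_distrib power2_eq_square mult_ac)
  also have "\<dots> \<le> 2 * (norm (\<Sum>s=1..n. g s - G))\<^sup>2 + 2 * real N * (real n * (norm G)\<^sup>2)"
    using assms by (simp add: mult_right_mono)
  finally show ?thesis .
qed simp

lemma (in prob_space) nn_integral_stopped_sum_le:
  fixes X :: "nat \<Rightarrow> 'a \<Rightarrow> 'v::euclidean_space" and b :: "'a \<Rightarrow> nat"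
  assumes subalg: "\<And>t. subalgebra M (F t)"
    and mono: "\<And>s t. s \<le> t \<Longrightarrow> subalgebra (F t) (F s)"
    and X: "\<And>s. 1 \<le> s \<Longrightarrow> X s \<in> borel_measurable (F s)"
    and centred: "\<And>s j. 1 \<le> s \<Longrightarrow> j \<in> Basis \<Longrightarrow>
      AE \<omega> in M. real_cond_exp M (F (s - 1)) (\<lambda>\<omega>. X s \<omega> \<bullet> j) \<omega> = 0"
    and var: "\<And>s. 1 \<le> s \<Longrightarrow>
      AE \<omega> in M. nn_cond_exp M (F (s - 1)) (\<lambda>\<omega>. ennreal ((norm (X s \<omega>))\<^sup>2)) \<omega> \<le> ennreal (\<sigma>\<^sup>2)"
    and b: "stopping_time F b" and b_le: "\<And>\<omega>. \<omega> \<in> space M \<Longrightarrow> b \<omega> \<le> N"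
  shows "(\<integral>\<^sup>+\<omega>. ennreal ((norm (\<Sum>s=1..b \<omega>. X s \<omega>))\<^sup>2) \<partial>M)
    \<le> ennreal (\<sigma>\<^sup>2) * (\<integral>\<^sup>+\<omega>. ennreal (real (b \<omega>)) \<partial>M)"
proof -
  have min_eq: "min (b \<omega>) N = b \<omega>" if "\<omega> \<in> space M" for \<omega>
    using b_le[OF that] by simp
  have "integrable M (\<lambda>\<omega>. (norm (\<Sum>s=1..min (b \<omega>) N. X s \<omega>))\<^sup>2) \<and>
      (\<integral>\<omega>. (norm (\<Sum>s=1..min (b \<omega>) N. X s \<omega>))\<^sup>2 \<partial>M) \<le> \<sigma>\<^sup>2 * (\<integral>\<omega>. real (min (b \<omega>) N) \<partial>M)"
    by (rule stopped_sum_second_moment_le[OF subalg mono X centred var b])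
  then have int: "integrable M (\<lambda>\<omega>. (norm (\<Sum>s=1..b \<omega>. X s \<omega>))\<^sup>2)"
    and le: "(\<integral>\<omega>. (norm (\<Sum>s=1..b \<omega>. X s \<omega>))\<^sup>2 \<partial>M) \<le> \<sigma>\<^sup>2 * (\<integral>\<omega>. real (b \<omega>) \<partial>M)"
    by (simp_all add: min_eq cong: Bochner_Integration.integrable_cong Bochner_Integration.integral_cong)
  have [measurable]: "b \<in> measurable M (count_space UNIV)"
    by (rule measurable_stopping_time_count_space[OF b subalg])
  have b_int: "integrable M (\<lambda>\<omega>. real (b \<omega>))"
    using b_le by (intro integrable_const_bound[where B="real N"]) auto
  have "(\<integral>\<^sup>+\<omega>. ennreal ((norm (\<Sum>s=1..b \<omega>. X s \<omega>))\<^sup>2) \<partial>M)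
      = ennreal (\<integral>\<omega>. (norm (\<Sum>s=1..b \<omega>. X s \<omega>))\<^sup>2 \<partial>M)"
    using int by (intro nn_integral_eq_integral) auto
  also have "\<dots> \<le> ennreal (\<sigma>\<^sup>2 * (\<integral>\<omega>. real (b \<omega>) \<partial>M))"
    using le by (rule ennreal_leI)
  also have "\<dots> = ennreal (\<sigma>\<^sup>2) * (\<integral>\<^sup>+\<omega>. ennreal (real (b \<omega>)) \<partial>M)"
    using b_int by (simp add: ennreal_mult nn_integral_eq_integral)
  finally show ?thesis .
qed

lemma (in prob_space) real_cond_exp_inner_diff_eq_0:
  fixes g :: "nat \<Rightarrow> 'a \<Rightarrow> 'v::euclidean_space" and G :: "'a \<Rightarrow> 'v"
  assumes subalg: "\<And>t. subalgebra M (F t)"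
    and mono: "\<And>s t. s \<le> t \<Longrightarrow> subalgebra (F t) (F s)"
    and G_meas: "G \<in> borel_measurable (F 0)"
    and g_int: "\<And>s. 1 \<le> s \<Longrightarrow> integrable M (g s)"
    and unbiased: "\<And>s j. 1 \<le> s \<Longrightarrow> j \<in> Basis \<Longrightarrow>
      AE \<omega> in M. real_cond_exp M (F (s - 1)) (\<lambda>\<omega>. g s \<omega> \<bullet> j) \<omega> = G \<omega> \<bullet> j"
    and s: "1 \<le> s" and j: "j \<in> Basis"
  shows "AE \<omega> in M. real_cond_exp M (F (s - 1)) (\<lambda>\<omega>. (g s \<omega> - G \<omega>) \<bullet> j) \<omega> = 0"
proof -
  have G_int: "integrable M (\<lambda>\<omega>. G \<omega> \<bullet> j)"
  proof -
    interpret finite_measure_subalgebra M "F 0"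
      by unfold_locales (rule subalg)
    have "integrable M (real_cond_exp M (F 0) (\<lambda>\<omega>. g 1 \<omega> \<bullet> j))"
      using g_int[of 1] by (intro real_cond_exp_int(1)) auto
    moreover have "(\<lambda>\<omega>. G \<omega> \<bullet> j) \<in> borel_measurable M"
      using measurable_from_subalg[OF subalg G_meas] by measurable
    moreover have "AE \<omega> in M. real_cond_exp M (F 0) (\<lambda>\<omega>. g 1 \<omega> \<bullet> j) \<omega> = G \<omega> \<bullet> j"
      using unbiased[of 1 j] j by simp
    ultimately show ?thesis
      by (rule integrable_cong_AE_imp)
  qed
  interpret finite_measure_subalgebra M "F (s - 1)"
    by unfold_locales (rule subalg)
  have [measurable]: "G \<in> borel_measurable (F (s - 1))"
    using measurable_from_subalg[OF mono[OF le0] G_meas] .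
  have "AE \<omega> in M. real_cond_exp M (F (s - 1)) (\<lambda>\<omega>. g s \<omega> \<bullet> j - G \<omega> \<bullet> j) \<omega> =
      real_cond_exp M (F (s - 1)) (\<lambda>\<omega>. g s \<omega> \<bullet> j) \<omega> - real_cond_exp M (F (s - 1)) (\<lambda>\<omega>. G \<omega> \<bullet> j) \<omega>"
    using g_int[OF s] G_int by (intro real_cond_exp_diff) auto
  moreover have "AE \<omega> in M. real_cond_exp M (F (s - 1)) (\<lambda>\<omega>. G \<omega> \<bullet> j) \<omega> = G \<omega> \<bullet> j"
    by (rule real_cond_exp_F_meas[OF G_int]) measurable
  ultimately show ?thesis
    using unbiased[OF s j] by eventually_elim (simp add: inner_diff_left)
qed

lemma (in prob_space) stochastic_batch_second_moment_le:
  fixes g :: "nat \<Rightarrow> 'a \<Rightarrow> 'v::euclidean_space" and G :: "'a \<Rightarrow> 'v" and b :: "'a \<Rightarrow> nat"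
  assumes subalg: "\<And>t. subalgebra M (F t)"
    and mono: "\<And>s t. s \<le> t \<Longrightarrow> subalgebra (F t) (F s)"
    and g_meas: "\<And>s. 1 \<le> s \<Longrightarrow> g s \<in> borel_measurable (F s)"
    and G_meas: "G \<in> borel_measurable (F 0)"
    and g_int: "\<And>s. 1 \<le> s \<Longrightarrow> integrable M (g s)"
    and unbiased: "\<And>s j. 1 \<le> s \<Longrightarrow> j \<in> Basis \<Longrightarrow>
      AE \<omega> in M. real_cond_exp M (F (s - 1)) (\<lambda>\<omega>. g s \<omega> \<bullet> j) \<omega> = G \<omega> \<bullet> j"
    and variance: "\<And>s. 1 \<le> s \<Longrightarrow>
      AE \<omega> in M. nn_cond_exp M (F (s - 1)) (\<lambda>\<omega>. ennreal ((norm (g s \<omega> - G \<omega>))\<^sup>2)) \<omega> \<le> ennreal (\<sigma>\<^sup>2)"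
    and b: "stopping_time F b" and b_le: "\<And>\<omega>. \<omega> \<in> space M \<Longrightarrow> b \<omega> \<le> N"
  shows "(\<integral>\<^sup>+\<omega>. ennreal ((real (b \<omega>))\<^sup>2 * (norm ((1 / real (b \<omega>)) *\<^sub>R (\<Sum>s=1..b \<omega>. g s \<omega>)))\<^sup>2) \<partial>M)
    \<le> ennreal (2 * real N) * (\<integral>\<^sup>+\<omega>. ennreal (real (b \<omega>) * (norm (G \<omega>))\<^sup>2) \<partial>M)
      + ennreal (2 * \<sigma>\<^sup>2) * (\<integral>\<^sup>+\<omega>. ennreal (real (b \<omega>)) \<partial>M)"
proof -
  define X where "X s \<omega> = g s \<omega> - G \<omega>" for s \<omega>
  define V where "V \<omega> = (norm (\<Sum>s=1..b \<omega>. X s \<omega>))\<^sup>2" for \<omega>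
  have X_F: "X s \<in> borel_measurable (F s)" if "1 \<le> s" for s
    unfolding X_def[abs_def]
    using g_meas[OF that] measurable_from_subalg[OF mono[OF le0] G_meas] by (rule borel_measurable_diff)
  have centred: "AE \<omega> in M. real_cond_exp M (F (s - 1)) (\<lambda>\<omega>. X s \<omega> \<bullet> j) \<omega> = 0"
    if "1 \<le> s" "j \<in> Basis" for s j
    unfolding X_def using subalg mono G_meas g_int unbiased that by (rule real_cond_exp_inner_diff_eq_0)
  have var: "AE \<omega> in M. nn_cond_exp M (F (s - 1)) (\<lambda>\<omega>. ennreal ((norm (X s \<omega>))\<^sup>2)) \<omega> \<le> ennreal (\<sigma>\<^sup>2)"
    if "1 \<le> s" for s
    unfolding X_def using variance[OF that] .
  have noise: "(\<integral>\<^sup>+\<omega>. ennreal (V \<omega>) \<partial>M) \<le> ennreal (\<sigma>\<^sup>2) * (\<integral>\<^sup>+\<omega>. ennreal (real (b \<omega>)) \<partial>M)"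
    unfolding V_def using subalg mono X_F centred var b b_le by (rule nn_integral_stopped_sum_le)
  have [measurable]: "b \<in> measurable M (count_space UNIV)" "G \<in> borel_measurable M"
    using measurable_stopping_time_count_space[OF b subalg] measurable_from_subalg[OF subalg G_meas] .
  have "(\<lambda>\<omega>. \<Sum>s=1..min (b \<omega>) N. X s \<omega>) \<in> borel_measurable M"
    using measurable_from_subalg[OF subalg borel_measurable_stopped_sum[OF mono X_F b]] .
  then have "(\<lambda>\<omega>. \<Sum>s=1..b \<omega>. X s \<omega>) \<in> borel_measurable M"
    by (rule measurable_cong[THEN iffD1, rotated]) (simp add: b_le min_absorb1)
  then have [measurable]: "V \<in> borel_measurable M"
    unfolding V_def[abs_def] by measurable
  have pointwise: "ennreal ((real (b \<omega>))\<^sup>2 * (norm ((1 / real (b \<omega>)) *\<^sub>R (\<Sum>s=1..b \<omega>. g s \<omega>)))\<^sup>2)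
      \<le> 2 * ennreal (V \<omega>) + ennreal (2 * real N) * ennreal (real (b \<omega>) * (norm (G \<omega>))\<^sup>2)"
    if "\<omega> \<in> space M" for \<omega>
  proof -
    have "(real (b \<omega>))\<^sup>2 * (norm ((1 / real (b \<omega>)) *\<^sub>R (\<Sum>s=1..b \<omega>. g s \<omega>)))\<^sup>2
        \<le> 2 * V \<omega> + 2 * real N * (real (b \<omega>) * (norm (G \<omega>))\<^sup>2)"
      using power2_norm_batch_sum_le[OF b_le[OF that]] by (simp add: X_def V_def)
    then have "ennreal ((real (b \<omega>))\<^sup>2 * (norm ((1 / real (b \<omega>)) *\<^sub>R (\<Sum>s=1..b \<omega>. g s \<omega>)))\<^sup>2)
        \<le> ennreal (2 * V \<omega> + 2 * real N * (real (b \<omega>) * (norm (G \<omega>))\<^sup>2))"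
      by (rule ennreal_leI)
    also have "\<dots> = 2 * ennreal (V \<omega>) + ennreal (2 * real N) * ennreal (real (b \<omega>) * (norm (G \<omega>))\<^sup>2)"
      by (simp add: V_def ennreal_plus ennreal_mult)
    finally show ?thesis .
  qed
  have "(\<integral>\<^sup>+\<omega>. ennreal ((real (b \<omega>))\<^sup>2 * (norm ((1 / real (b \<omega>)) *\<^sub>R (\<Sum>s=1..b \<omega>. g s \<omega>)))\<^sup>2) \<partial>M)
      \<le> (\<integral>\<^sup>+\<omega>. 2 * ennreal (V \<omega>) + ennreal (2 * real N) * ennreal (real (b \<omega>) * (norm (G \<omega>))\<^sup>2) \<partial>M)"
    using pointwise by (rule nn_integral_mono)
  also have "\<dots> = 2 * (\<integral>\<^sup>+\<omega>. ennreal (V \<omega>) \<partial>M)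
      + ennreal (2 * real N) * (\<integral>\<^sup>+\<omega>. ennreal (real (b \<omega>) * (norm (G \<omega>))\<^sup>2) \<partial>M)"
    by (simp add: nn_integral_add nn_integral_cmult)
  also have "\<dots> \<le> 2 * (ennreal (\<sigma>\<^sup>2) * (\<integral>\<^sup>+\<omega>. ennreal (real (b \<omega>)) \<partial>M))
      + ennreal (2 * real N) * (\<integral>\<^sup>+\<omega>. ennreal (real (b \<omega>) * (norm (G \<omega>))\<^sup>2) \<partial>M)"
    using noise by (intro add_right_mono mult_left_mono) auto
  finally show ?thesis
    by (simp add: ennreal_mult mult.assoc add.commute)
qed

theorem lemma2:
  fixes M :: "'a measure" and H :: "'a measure"
    and D :: "'z set" and loss :: "'z \<Rightarrow> 'v::euclidean_space \<Rightarrow> real"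
    and \<theta> :: "'a \<Rightarrow> 'v" and z :: "nat \<Rightarrow> 'a \<Rightarrow> 'z"
    and b :: "'a \<Rightarrow> nat" and b_max :: nat and \<sigma> :: real
  defines "F \<equiv> smp_filt M H z"
  defines "g \<equiv> (\<lambda>s \<omega>. grad (loss (z s \<omega>)) (\<theta> \<omega>))"
  defines "gradL \<equiv> grad (emp_loss D loss)"
  defines "g_i \<equiv> (\<lambda>\<omega>. (1 / real (b \<omega>)) *\<^sub>R (\<Sum>s=1..b \<omega>. g s \<omega>))"
  defines "\<alpha> \<equiv> (\<lambda>\<omega>. real (b \<omega>))"
  assumes M: "prob_space M"
    and D: "finite D" "D \<noteq> {}"
    and loss_diff: "\<And>d x. d \<in> D \<Longrightarrow> loss d differentiable (at x)"
    and grad_meas: "\<And>d. d \<in> D \<Longrightarrow> grad (loss d) \<in> borel_measurable borel"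
    and H: "subalgebra M H"
    and \<theta>_meas: "\<theta> \<in> borel_measurable H"
    and z_meas: "\<And>s. s \<ge> 1 \<Longrightarrow> z s \<in> measurable M (count_space UNIV)"
    and z_in: "\<And>s \<omega>. s \<ge> 1 \<Longrightarrow> \<omega> \<in> space M \<Longrightarrow> z s \<omega> \<in> D"
    and g_int: "\<And>s. s \<ge> 1 \<Longrightarrow> integrable M (g s)"
    and unbiased: "\<And>s j. s \<ge> 1 \<Longrightarrow> j \<in> Basis \<Longrightarrow>
        AE \<omega> in M. real_cond_exp M (F (s - 1)) (\<lambda>\<omega>. g s \<omega> \<bullet> j) \<omega> = gradL (\<theta> \<omega>) \<bullet> j"
    and variance: "\<And>s. s \<ge> 1 \<Longrightarrow>
        AE \<omega> in M. nn_cond_exp M (F (s - 1))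
           (\<lambda>\<omega>. ennreal ((norm (g s \<omega> - gradL (\<theta> \<omega>)))\<^sup>2)) \<omega> \<le> ennreal (\<sigma>\<^sup>2)"
    and b_stop: "stopping_time F b"
    and b_pos: "\<And>\<omega>. \<omega> \<in> space M \<Longrightarrow> 1 \<le> b \<omega>"
    and b_le: "\<And>\<omega>. \<omega> \<in> space M \<Longrightarrow> b \<omega> \<le> b_max"
  shows "((\<integral>\<^sup>+ \<omega>. ennreal ((\<alpha> \<omega>)\<^sup>2 * (norm (g_i \<omega>))\<^sup>2) \<partial>M)
           \<le> ennreal (2 * real b_max) * (\<integral>\<^sup>+ \<omega>. ennreal (\<alpha> \<omega> * (norm (gradL (\<theta> \<omega>)))\<^sup>2) \<partial>M)
             + ennreal (2 * \<sigma>\<^sup>2) * (\<integral>\<^sup>+ \<omega>. ennreal (real (b \<omega>)) \<partial>M))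
    \<and> (\<forall>L \<theta>s. L-lipschitz_on UNIV gradL \<longrightarrow> (\<forall>x. emp_loss D loss \<theta>s \<le> emp_loss D loss x) \<longrightarrow>
         (\<integral>\<^sup>+ \<omega>. ennreal ((\<alpha> \<omega>)\<^sup>2 * (norm (g_i \<omega>))\<^sup>2) \<partial>M)
           \<le> ennreal (4 * real b_max * L) *
               (\<integral>\<^sup>+ \<omega>. ennreal (\<alpha> \<omega> * (emp_loss D loss (\<theta> \<omega>) - emp_loss D loss \<theta>s)) \<partial>M)
             + ennreal (2 * \<sigma>\<^sup>2) * (\<integral>\<^sup>+ \<omega>. ennreal (real (b \<omega>)) \<partial>M))"
proof -
  interpret prob_space M
    by (rule M)
  have subalg: "subalgebra M (F t)" for t
    unfolding F_def using H z_meas by (rule subalgebra_smp_filt)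
  have mono: "subalgebra (F t) (F s)" if "s \<le> t" for s t
    unfolding F_def using H that by (rule subalgebra_smp_filt_mono)
  have g_F: "g s \<in> borel_measurable (F s)" if "1 \<le> s" for s
    unfolding g_def F_def using H that order_refl countable_finite[OF D(1)] z_in[OF that] \<theta>_meas grad_meas
    by (rule borel_measurable_smp_filt_sample_apply)
  have gradL_F: "(\<lambda>\<omega>. gradL (\<theta> \<omega>)) \<in> borel_measurable (F 0)"
    using measurable_smp_filt_base[OF H \<theta>_meas] borel_measurable_grad_emp_loss[OF loss_diff grad_meas]
    unfolding F_def gradL_def by measurable
  have first: "(\<integral>\<^sup>+ \<omega>. ennreal ((\<alpha> \<omega>)\<^sup>2 * (norm (g_i \<omega>))\<^sup>2) \<partial>M)
      \<le> ennreal (2 * real b_max) * (\<integral>\<^sup>+ \<omega>. ennreal (\<alpha> \<omega> * (norm (gradL (\<theta> \<omega>)))\<^sup>2) \<partial>M)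
        + ennreal (2 * \<sigma>\<^sup>2) * (\<integral>\<^sup>+ \<omega>. ennreal (real (b \<omega>)) \<partial>M)"
    unfolding g_i_def \<alpha>_def using subalg mono g_F gradL_F g_int unbiased variance b_stop b_le
    by (rule stochastic_batch_second_moment_le)
  moreover have "(\<integral>\<^sup>+ \<omega>. ennreal ((\<alpha> \<omega>)\<^sup>2 * (norm (g_i \<omega>))\<^sup>2) \<partial>M)
      \<le> ennreal (4 * real b_max * L) *
          (\<integral>\<^sup>+ \<omega>. ennreal (\<alpha> \<omega> * (emp_loss D loss (\<theta> \<omega>) - emp_loss D loss \<theta>s)) \<partial>M)
        + ennreal (2 * \<sigma>\<^sup>2) * (\<integral>\<^sup>+ \<omega>. ennreal (real (b \<omega>)) \<partial>M)"
    if lip: "L-lipschitz_on UNIV gradL" and min: "\<forall>x. emp_loss D loss \<theta>s \<le> emp_loss D loss x" for L \<theta>s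
  proof -
    have "(\<integral>\<^sup>+ \<omega>. ennreal (\<alpha> \<omega> * (norm (gradL (\<theta> \<omega>)))\<^sup>2) \<partial>M)
        \<le> ennreal (2 * L) * (\<integral>\<^sup>+ \<omega>. ennreal (\<alpha> \<omega> * (emp_loss D loss (\<theta> \<omega>) - emp_loss D loss \<theta>s)) \<partial>M)"
      unfolding \<alpha>_def gradL_def
      using has_derivative_grad_emp_loss[OF loss_diff] lip[unfolded gradL_def] min
        measurable_from_subalg[OF H \<theta>_meas] measurable_stopping_time_count_space[OF b_stop subalg]
      by (intro nn_integral_weighted_power2_norm_gradient_le) auto
    then have "ennreal (2 * real b_max) * (\<integral>\<^sup>+ \<omega>. ennreal (\<alpha> \<omega> * (norm (gradL (\<theta> \<omega>)))\<^sup>2) \<partial>M)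
        \<le> ennreal (2 * real b_max) * ennreal (2 * L) *
          (\<integral>\<^sup>+ \<omega>. ennreal (\<alpha> \<omega> * (emp_loss D loss (\<theta> \<omega>) - emp_loss D loss \<theta>s)) \<partial>M)"
      by (simp add: mult.assoc mult_left_mono)
    also have "ennreal (2 * real b_max) * ennreal (2 * L) = ennreal (4 * real b_max * L)"
      using lipschitz_on_nonneg[OF lip] by (simp add: ennreal_mult[symmetric] mult_ac)
    finally show ?thesis
      using first by (meson add_right_mono order_trans)
  qed
  ultimately show ?thesis
    by blast
qed

end
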